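(* Let $\kappa>-1$ and let $ds^2_\kappa$ be the Jensen metric on the Stiefel variety $V(n,r)$, i.e. the Riemannian metric whose kinetic energy function on $T^*V(n,r)$ is $$T_\kappa(X,P)=\tfrac12\operatorname{tr}(P^TP)-\left(\tfrac12+\kappa\right)\operatorname{tr}((X^TP)^2).$$ Then the Legendre transformation $TV(n,r)\to T^*V(n,r)$ determined by $ds^2_\kappa$ and its inverse are given by $$P=\dot X-\frac{1+2\kappa}{2+2\kappa}\,XX^T\dot X,\qquad \dot X=P-(1+2\kappa)\,XP^TX,$$ respectively, where $(X,\dot X)$ satisfies $X^TX=\mathbf I_r$, $X^T\dot X+\dot X^TX=0$ and $(X,P)$ satisfies $X^TX=\mathbf I_r$, $X^TP+P^TX=0$.
   Context: $V(n,r)=\{X\in M_{n,r}(\mathbb R): X^TX=\mathbf I_r\}$ is the Stiefel variety. Its tangent bundle is realized as pairs $(X,\dot X)$ of $n\times r$ matrices with $X^TX=\mathbf I_r$, $X^T\dot X+\dot X^TX=0$; its cotangent bundle is realized as pairs $(X,P)$ of $n\times r$ matrices with $X^TX=\mathbf I_r$, $X^TP+P^TX=0$, covectors being paired with tangent vectors by $\operatorname{tr}(P^T\dot X)$ (the restriction of the ambient Euclidean structure of $M_{n,r}(\mathbb R)$). Equivalently, $T_\kappa=\frac12\langle\Phi,\Phi\rangle+\frac12\kappa\langle\Psi,\Psi\rangle$ with $\Phi=PX^T-XP^T$, $\Psi=X^TP-P^TX$ and $\langle\eta_1,\eta_2\rangle=-\frac12\operatorname{tr}(\eta_1\eta_2)$.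 *)

theory Defs
  imports "HOL-Analysis.Analysis"
begin

text \<open>n x r real matrices are modelled as real^'r^'n (rows indexed by 'n, columns by 'r).\<close>

definition stiefel :: "real^'r^'n \<Rightarrow> bool" where
  "stiefel X \<longleftrightarrow> transpose X ** X = mat 1"

definition tangent_vec :: "real^'r^'n \<Rightarrow> real^'r^'n \<Rightarrow> bool" where
  "tangent_vec X V \<longleftrightarrow> transpose X ** V + transpose V ** X = 0"

text \<open>Covectors at X: X^T P + P^T X = 0 (same realisation, paired by trace).\<close>
definition cotangent_vec :: "real^'r^'n \<Rightarrow> real^'r^'n \<Rightarrow> bool" where
  "cotangent_vec X P \<longleftrightarrow> transpose X ** P + transpose P ** X = 0"

definition pairing :: "real^'r^'n \<Rightarrow> real^'r^'n \<Rightarrow> real" where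
  "pairing P V = trace (transpose P ** V)"

definition T_kappa :: "real \<Rightarrow> real^'r^'n \<Rightarrow> real^'r^'n \<Rightarrow> real" where
  "T_kappa \<kappa> X P = 1/2 * trace (transpose P ** P)
      - (1/2 + \<kappa>) * trace ((transpose X ** P) ** (transpose X ** P))"

text \<open>Inverse Legendre transformation: the tangent vector V is the fibre derivative of
  T_kappa at the covector P, i.e. dT(P)[Q] = <Q, V> for all covectors Q at X.\<close>
definition inv_legendre_rel :: "real \<Rightarrow> real^'r^'n \<Rightarrow> real^'r^'n \<Rightarrow> real^'r^'n \<Rightarrow> bool" where
  "inv_legendre_rel \<kappa> X P V \<longleftrightarrow> cotangent_vec X P \<and> tangent_vec X V \<and>
     (\<forall>Q. cotangent_vec X Q \<longrightarrow>
        ((\<lambda>t. T_kappa \<kappa> X (P + t *\<^sub>R Q)) has_real_derivative pairing Q V) (at 0))"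

definition legendre_rel :: "real \<Rightarrow> real^'r^'n \<Rightarrow> real^'r^'n \<Rightarrow> real^'r^'n \<Rightarrow> bool" where
  "legendre_rel \<kappa> X V P \<longleftrightarrow> inv_legendre_rel \<kappa> X P V"

end

theory Submission
  imports Defs
begin

text \<open>Expanding the quadratic form \<open>T_kappa\<close> along \<open>P + t Q\<close> and using cyclicity of the
  trace, its fibre derivative at \<open>P\<close> is the pairing with \<open>P - (1 + 2\<kappa>) X P\<^sup>T X\<close>; since the
  pairing is the Frobenius inner product, it determines tangent vectors. For a covector,
  \<open>X P\<^sup>T X = - X X\<^sup>T P\<close>, so both Legendre maps are of the form \<open>V \<mapsto> V + c X X\<^sup>T V\<close>. As
  \<open>X X\<^sup>T\<close> is idempotent, such maps compose by multiplying the factors \<open>1 + c\<close>, and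
  \<open>(2 + 2\<kappa>) \<cdot> (1 - (1 + 2\<kappa>) / (2 + 2\<kappa>)) = 1\<close>.\<close>

lemma transpose_add: "transpose (A + B) = transpose A + transpose (B::'a::semiring_1^'n^'m)"
  by (vector transpose_def)

lemma transpose_diff: "transpose (A - B) = transpose A - transpose (B::'a::ring_1^'n^'m)"
  by (vector transpose_def)

lemma matrix_add_rdistrib: "((A::'a::semiring_1^'n^'m) + B) ** C = A ** C + B ** C"
  by (vector matrix_matrix_mult_def sum.distrib[symmetric] field_simps)

lemma matrix_diff_ldistrib: "(A::'a::ring_1^'n^'m) ** (B - C) = A ** B - A ** C"
  by (vector matrix_matrix_mult_def sum_subtractf[symmetric] field_simps)

lemma matrix_diff_rdistrib: "((A::'a::ring_1^'n^'m) - B) ** C = A ** C - B ** C"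
  by (vector matrix_matrix_mult_def sum_subtractf[symmetric] field_simps)

lemma matrix_mul_minus_right: "(A::'a::ring_1^'n^'m) ** (- B) = - (A ** B)"
  by (vector matrix_matrix_mult_def sum_negf[symmetric])

lemma matrix_mul_scaleR_right: "A ** (c *\<^sub>R B) = c *\<^sub>R (A ** (B::real^'n^'m))"
  by (simp add: matrix_scalar_ac scalar_matrix_assoc)

lemma trace_scaleR: "trace (c *\<^sub>R (A::real^'n^'n)) = c * trace A"
  by (simp add: trace_def sum_distrib_left)

lemma trace_transpose: "trace (transpose (A::'a::semiring_1^'n^'n)) = trace A"
  by (simp add: trace_def transpose_def)

lemma trace_transpose_mul_comm: "trace (transpose A ** B) = trace (transpose B ** (A::real^'n^'m))"
  by (metis trace_transpose matrix_transpose_mul transpose_transpose)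

lemma trace_transpose_mul_self: "trace (transpose A ** A) = (norm (A::real^'n^'m))\<^sup>2"
proof -
  have "trace (transpose A ** A) = (\<Sum>i\<in>UNIV. \<Sum>k\<in>UNIV. A$k$i * A$k$i)"
    by (simp add: trace_def matrix_matrix_mult_def transpose_def)
  also have "\<dots> = (\<Sum>k\<in>UNIV. \<Sum>i\<in>UNIV. A$k$i * A$k$i)"
    by (rule sum.swap)
  also have "\<dots> = (norm A)\<^sup>2"
    by (simp add: power2_norm_eq_inner inner_vec_def)
  finally show ?thesis .
qed

lemma tangent_vec_eq_cotangent_vec: "tangent_vec = cotangent_vec"
  by (simp add: fun_eq_iff tangent_vec_def cotangent_vec_def)

lemma cotangent_vec_diff:
  assumes "cotangent_vec X V" and "cotangent_vec X W"
  shows "cotangent_vec X (V - W)"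
proof -
  have "transpose X ** (V - W) + transpose (V - W) ** X
      = (transpose X ** V + transpose V ** X) - (transpose X ** W + transpose W ** X)"
    by (simp add: matrix_diff_ldistrib matrix_diff_rdistrib transpose_diff)
  with assms show ?thesis by (simp add: cotangent_vec_def)
qed

lemma cotangent_vec_eqI:
  assumes "cotangent_vec X V" and "cotangent_vec X W"
    and "\<And>Q. cotangent_vec X Q \<Longrightarrow> pairing Q V = pairing Q W"
  shows "V = W"
proof -
  have "pairing (V - W) V = pairing (V - W) W"
    using assms by (simp add: cotangent_vec_diff)
  then have "(norm (V - W))\<^sup>2 = 0"
    by (simp add: pairing_def matrix_diff_ldistrib trace_sub trace_transpose_mul_self[symmetric])
  then show ?thesis by simp
qed

text \<open>For \<open>stiefel X\<close>, \<open>X X\<^sup>T\<close> is the orthogonal projection onto the column space of \<open>X\<close>,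
  and \<open>stretch X c\<close> scales that component by \<open>1 + c\<close>.\<close>

definition stretch :: "real^'r^'n \<Rightarrow> real \<Rightarrow> real^'r^'n \<Rightarrow> real^'r^'n" where
  "stretch X c V = V + c *\<^sub>R (X ** transpose X ** V)"

lemma stretch_0 [simp]: "stretch X 0 V = V"
  by (simp add: stretch_def)

lemma stretch_stretch:
  assumes "stiefel X"
  shows "stretch X d (stretch X c V) = stretch X (c + d + c * d) V"
proof -
  have "X ** transpose X ** (X ** transpose X ** V) = X ** transpose X ** V"
    using assms by (simp add: stiefel_def matrix_mul_assoc) (metis matrix_mul_assoc matrix_mul_rid)
  then show ?thesis
    by (simp add: stretch_def matrix_add_ldistrib matrix_mul_scaleR_right
        scalar_matrix_assoc[symmetric] algebra_simps)
qed

lemma cotangent_vec_stretch: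
  assumes "stiefel X" and "cotangent_vec X V"
  shows "cotangent_vec X (stretch X c V)"
proof -
  have "transpose X ** stretch X c V = (1 + c) *\<^sub>R (transpose X ** V)"
    using assms(1) by (simp add: stiefel_def stretch_def matrix_add_ldistrib matrix_mul_scaleR_right
        scalar_matrix_assoc[symmetric] matrix_mul_assoc algebra_simps)
  moreover have "transpose (stretch X c V) ** X = (1 + c) *\<^sub>R (transpose V ** X)"
    using assms(1) by (simp add: stiefel_def stretch_def transpose_add transpose_scalar
        matrix_transpose_mul matrix_add_rdistrib scalar_matrix_assoc[symmetric]
        matrix_mul_assoc[symmetric] algebra_simps)
  ultimately show ?thesis
    using assms(2) by (simp add: cotangent_vec_def scaleR_add_right[symmetric])
qed

lemma cotangent_vec_sandwich:
  assumes "cotangent_vec X P"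
  shows "P - c *\<^sub>R (X ** transpose P ** X) = stretch X c P"
proof -
  have "transpose P ** X = - (transpose X ** P)"
    using assms by (simp add: cotangent_vec_def eq_neg_iff_add_eq_0 add.commute)
  then show ?thesis
    by (simp add: stretch_def matrix_mul_assoc[symmetric] matrix_mul_minus_right)
qed

lemma pairing_sandwich:
  "pairing Q (X ** transpose P ** X) = trace ((transpose X ** Q) ** (transpose X ** P))"
proof -
  have "pairing Q (X ** transpose P ** X) = trace ((transpose Q ** X) ** (transpose P ** X))"
    by (simp add: pairing_def matrix_mul_assoc)
  also have "\<dots> = trace ((transpose P ** X) ** (transpose Q ** X))"
    by (rule trace_mul_sym)
  also have "\<dots> = trace (transpose ((transpose X ** Q) ** (transpose X ** P)))"
    by (simp add: matrix_transpose_mul)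
  finally show ?thesis by (simp add: trace_transpose)
qed

lemma square_add_scaleR:
  "(A + t *\<^sub>R B) ** (A + t *\<^sub>R B) = A ** A + t *\<^sub>R (A ** B + B ** A) + t\<^sup>2 *\<^sub>R (B ** (B::real^'n^'n))"
  by (simp add: matrix_add_ldistrib matrix_add_rdistrib matrix_mul_scaleR_right
      scalar_matrix_assoc[symmetric] power2_eq_square algebra_simps)

lemma T_kappa_add_scaleR:
  "T_kappa \<kappa> X (P + t *\<^sub>R Q) = T_kappa \<kappa> X P
     + t * pairing Q (P - (1 + 2*\<kappa>) *\<^sub>R (X ** transpose P ** X)) + t\<^sup>2 * T_kappa \<kappa> X Q"
proof -
  have "transpose (P + t *\<^sub>R Q) ** (P + t *\<^sub>R Q)
      = transpose P ** P + t *\<^sub>R (transpose P ** Q + transpose Q ** P) + t\<^sup>2 *\<^sub>R (transpose Q ** Q)"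
    by (simp add: transpose_add transpose_scalar matrix_add_ldistrib matrix_add_rdistrib
        matrix_mul_scaleR_right scalar_matrix_assoc[symmetric] power2_eq_square algebra_simps)
  moreover have "transpose X ** (P + t *\<^sub>R Q) = transpose X ** P + t *\<^sub>R (transpose X ** Q)"
    by (simp add: matrix_add_ldistrib matrix_mul_scaleR_right)
  moreover have "pairing Q (P - (1 + 2*\<kappa>) *\<^sub>R (X ** transpose P ** X))
      = trace (transpose Q ** P) - (1 + 2*\<kappa>) * trace ((transpose X ** Q) ** (transpose X ** P))"
    by (simp add: pairing_sandwich[symmetric]) (simp add: pairing_def matrix_diff_ldistrib
        trace_sub matrix_mul_scaleR_right trace_scaleR)
  moreover have "trace ((transpose X ** P) ** (transpose X ** Q))
      = trace ((transpose X ** Q) ** (transpose X ** P))"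
    by (rule trace_mul_sym)
  ultimately show ?thesis
    by (simp add: T_kappa_def square_add_scaleR trace_add trace_scaleR
        trace_transpose_mul_comm[of P Q]) (simp add: algebra_simps)
qed

lemma T_kappa_fibre_derivative:
  "((\<lambda>t. T_kappa \<kappa> X (P + t *\<^sub>R Q))
      has_real_derivative pairing Q (P - (1 + 2*\<kappa>) *\<^sub>R (X ** transpose P ** X))) (at 0)"
  unfolding T_kappa_add_scaleR by (auto intro!: derivative_eq_intros)

lemma inv_legendre_rel_iff_stretch:
  assumes X: "stiefel X" and P: "cotangent_vec X P"
  shows "inv_legendre_rel \<kappa> X P V \<longleftrightarrow> V = stretch X (1 + 2*\<kappa>) P"
proof -
  let ?V = "stretch X (1 + 2*\<kappa>) P"
  have deriv: "((\<lambda>t. T_kappa \<kappa> X (P + t *\<^sub>R Q)) has_real_derivative pairing Q ?V) (at 0)" for Q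
    using T_kappa_fibre_derivative[of \<kappa> X P Q] unfolding cotangent_vec_sandwich[OF P] .
  have V: "cotangent_vec X ?V"
    using X P by (rule cotangent_vec_stretch)
  show ?thesis
  proof
    assume rel: "inv_legendre_rel \<kappa> X P V"
    show "V = ?V"
    proof (rule cotangent_vec_eqI)
      show "cotangent_vec X V"
        using rel by (simp add: inv_legendre_rel_def tangent_vec_eq_cotangent_vec)
      show "pairing Q V = pairing Q ?V" if "cotangent_vec X Q" for Q
        using rel that DERIV_unique[OF _ deriv] by (simp add: inv_legendre_rel_def)
    qed (rule V)
  next
    assume "V = ?V"
    then show "inv_legendre_rel \<kappa> X P V"
      using P V deriv by (simp add: inv_legendre_rel_def tangent_vec_eq_cotangent_vec)
  qed
qed

lemma legendre_rel_iff_stretch: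
  assumes "\<kappa> > -1" and X: "stiefel X" and V: "cotangent_vec X V"
  shows "legendre_rel \<kappa> X V P \<longleftrightarrow> P = stretch X (- ((1 + 2*\<kappa>) / (2 + 2*\<kappa>))) V"
proof -
  let ?b = "1 + 2*\<kappa>" and ?a = "- ((1 + 2*\<kappa>) / (2 + 2*\<kappa>))"
  have inverse: "?b + ?a + ?b * ?a = 0" "?a + ?b + ?a * ?b = 0"
    using assms(1) by (simp_all add: field_simps)
  show ?thesis
  proof
    assume "legendre_rel \<kappa> X V P"
    then have "cotangent_vec X P" and "V = stretch X ?b P"
      using inv_legendre_rel_iff_stretch[OF X] by (auto simp: legendre_rel_def inv_legendre_rel_def)
    then show "P = stretch X ?a V"
      using inverse by (simp add: stretch_stretch[OF X])
  next
    assume P: "P = stretch X ?a V"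
    then have "V = stretch X ?b P"
      using inverse by (simp add: stretch_stretch[OF X])
    moreover have "cotangent_vec X P"
      using P X V by (simp add: cotangent_vec_stretch)
    ultimately show "legendre_rel \<kappa> X V P"
      by (simp add: legendre_rel_def inv_legendre_rel_iff_stretch[OF X])
  qed
qed

theorem lemma1:
  fixes \<kappa> :: real and X :: "real^'r^'n"
  assumes "\<kappa> > -1" and "stiefel X"
  shows "(\<forall>V. tangent_vec X V \<longrightarrow>
            (\<forall>P. legendre_rel \<kappa> X V P \<longleftrightarrow>
                 P = V - ((1 + 2*\<kappa>) / (2 + 2*\<kappa>)) *\<^sub>R (X ** transpose X ** V)))
       \<and> (\<forall>P. cotangent_vec X P \<longrightarrow>
            (\<forall>V. inv_legendre_rel \<kappa> X P V \<longleftrightarrow>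
                 V = P - (1 + 2*\<kappa>) *\<^sub>R (X ** transpose P ** X)))"
  using legendre_rel_iff_stretch[OF assms] inv_legendre_rel_iff_stretch[OF assms(2)]
  by (simp add: tangent_vec_eq_cotangent_vec cotangent_vec_sandwich stretch_def)

end
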